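(* For every integer $n\ge 0$ and every real number $x$, \[ \sum_{l=0}^{n}\frac{\binom{n}{l}E_{n-l}(x)}{n+l+1}=\sum_{l=0}^{n}(-1)^l\,\frac{E_{n-l}(1+x)}{n+l+1}\,\frac{\binom{n}{l}}{\binom{n+l}{l}} . \] In particular, for $x=0$, \[ \sum_{l=0}^{n}\frac{\binom{n}{l}E_{n-l}}{n+l+1}=(-1)^n\sum_{l=0}^{n}\frac{E_{n-l}}{n+l+1}\,\frac{\binom{n}{l}}{\binom{n+l}{l}} . \]
   Context: The Euler polynomials $E_n(x)$ are defined by the generating function $\frac{2}{e^t+1}e^{xt}=\sum_{n\ge0}E_n(x)\frac{t^n}{n!}$, and the Euler numbers are $E_n=E_n(0)$, i.e. $\frac{2}{e^t+1}=\sum_{n\ge 0}E_n\frac{t^n}{n!}$. *)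

theory Defs
  imports "HOL-Computational_Algebra.Formal_Power_Series"
begin

definition euler_poly :: "nat \<Rightarrow> real \<Rightarrow> real" where
  "euler_poly n x =
     fact n * fps_nth (fps_const 2 * fps_exp x / (fps_exp 1 + 1)) n"

definition euler_num :: "nat \<Rightarrow> real" where
  "euler_num n = euler_poly n 0"

end

theory Submission
  imports Defs
begin

(*
  Write B(n,l) = n! l! / (n+l+1)! for the Beta integral of t^n (1-t)^l over [0,1].
  The weight in the theorem is  C(n,l) / ((n+l+1) C(n+l,l)) = C(n,l) B(n,l),  and the identity
      sum_l (-1)^l C(m,l) B(n,l) = 1 / (n+m+1)
  (the integral of t^n (1 - (1-t))^m) yields, after exchanging two finite sums, an inversion
  formula valid for ANY real sequence a:
      sum_l C(n,l) a(n-l) / (n+l+1)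
        = sum_l (-1)^l (sum_k C(n-l,k) a(k)) / (n+l+1) * C(n,l) / C(n+l,l).
  The first claim follows by taking a = E_(.)(x), since by the Appell property of the
  generating function  E_m(1+x) = sum_k C(m,k) E_k(x).  The second claim is the case x = 0,
  rewritten with the reflection formula  E_m(1) = (-1)^m E_m(0).
*)

text \<open>The Beta integral \<open>\<integral>\<^sub>0\<^sup>1 t\<^sup>n (1 - t)\<^sup>l dt = n! l! / (n + l + 1)!\<close>, kept as a
  purely combinatorial quantity.\<close>
definition beta_nat :: "nat \<Rightarrow> nat \<Rightarrow> real" where
  "beta_nat n l = fact n * fact l / fact (n + l + 1)"

text \<open>Splitting \<open>(1 - t)\<^sup>l\<^sup>+\<^sup>1 = (1 - t)\<^sup>l - t (1 - t)\<^sup>l\<close> under the integral.\<close>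
lemma beta_nat_recurrence: "beta_nat n (Suc l) = beta_nat n l - beta_nat (Suc n) l"
proof -
  define A :: real where "A = fact n * fact l"
  define F :: real where "F = fact (n + l + 1)"
  define D :: real where "D = real (n + l + 2)"
  have "F > 0" "D > 0" by (simp_all add: F_def D_def)
  have "beta_nat n (Suc l) + beta_nat (Suc n) l = A * D / (D * F)"
    by (simp add: beta_nat_def A_def F_def D_def add_divide_distrib algebra_simps)
  also have "\<dots> = A / F"
    using \<open>D > 0\<close> by simp
  finally show ?thesis
    by (simp add: beta_nat_def A_def F_def)
qed

lemma beta_nat_binomial: "beta_nat n l = 1 / (real (n + l + 1) * real (n + l choose l))"
proof -
  have "real (n + l choose l) = fact (n + l) / (fact l * fact n)"
    using binomial_fact[of l "n + l"] by simp
  moreover have "fact (n + l + 1) = real (n + l + 1) * (fact (n + l) :: real)"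
    by simp
  ultimately show ?thesis
    by (simp add: beta_nat_def)
qed

text \<open>Choosing \<open>l\<close> elements of an \<open>n\<close>-set and then \<open>k\<close> of the remaining ones is the
  same as choosing the \<open>k\<close> first; the degenerate case \<open>k + l > n\<close> gives \<open>0 = 0\<close>.\<close>
lemma choose_subset_swap:
  assumes "l \<le> n"
  shows "(n - l choose k) * (n choose l) = (n choose k) * (n - k choose l)"
proof (cases "k \<le> n - l")
  case True
  have "(n choose (n - l)) * (n - l choose k) = (n choose k) * (n - k choose (n - l - k))"
    using choose_mult[OF True] by simp
  moreover have "n choose (n - l) = n choose l" "n - k choose (n - l - k) = n - k choose l"
    using assms True
    by (metis binomial_symmetric diff_diff_cancel diff_le_self,
        metis binomial_symmetric diff_commute diff_diff_cancel diff_le_mono2 le_diff_conv2 add.commute)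
  ultimately show ?thesis by (simp add: mult.commute)
qed (auto simp add: binomial_eq_0)

text \<open>The alternating sum \<open>\<Sum>\<^sub>l (-1)\<^sup>l C(m,l) B(n,l) = \<integral>\<^sub>0\<^sup>1 t\<^sup>n (1 - (1 - t))\<^sup>m dt\<close>.\<close>
definition alt_beta_sum :: "nat \<Rightarrow> nat \<Rightarrow> real" where
  "alt_beta_sum m n = (\<Sum>l=0..m. (-1) ^ l * real (m choose l) * beta_nat n l)"

text \<open>Pascal's rule together with the Beta recurrence moves one unit from \<open>m\<close> to \<open>n\<close>.\<close>
lemma alt_beta_sum_Suc: "alt_beta_sum (Suc m) n = alt_beta_sum m (Suc n)"
proof -
  define t where "t j l = (-1) ^ l * real (m choose j) * beta_nat n l" for j l
  have "alt_beta_sum (Suc m) n = t 0 0 + (\<Sum>l=0..m. t (Suc l) (Suc l) + t l (Suc l))"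
    unfolding alt_beta_sum_def t_def
    by (subst sum.atLeast0_atMost_Suc_shift) (simp add: algebra_simps)
  also have "\<dots> = (t 0 0 + (\<Sum>l=0..m. t (Suc l) (Suc l))) + (\<Sum>l=0..m. t l (Suc l))"
    by (simp add: sum.distrib)
  also have "t 0 0 + (\<Sum>l=0..m. t (Suc l) (Suc l)) = (\<Sum>l=0..Suc m. t l l)"
    by (subst sum.atLeast0_atMost_Suc_shift) simp
  also have "\<dots> = alt_beta_sum m n"
    by (simp add: alt_beta_sum_def t_def)
  also have "(\<Sum>l=0..m. t l (Suc l)) = alt_beta_sum m (Suc n) - alt_beta_sum m n"
    unfolding alt_beta_sum_def t_def beta_nat_recurrence
    by (simp add: sum_subtractf[symmetric] algebra_simps)
  finally show ?thesis by simp
qed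

lemma alt_beta_sum_eq: "alt_beta_sum m n = 1 / real (n + m + 1)"
proof (induction m arbitrary: n)
  case 0
  then show ?case by (simp add: alt_beta_sum_def beta_nat_def)
next
  case (Suc m)
  then show ?case by (simp add: alt_beta_sum_Suc)
qed

text \<open>The coefficient of \<open>a\<^sub>k\<close> on the right-hand side of the inversion formula below.\<close>
lemma alt_sum_coefficient:
  assumes "k \<le> n"
  shows "(\<Sum>l=0..n. (-1) ^ l * real (n - l choose k) * (real (n choose l) * beta_nat n l))
       = real (n choose k) / real (n + (n - k) + 1)"
proof -
  have "(\<Sum>l=0..n. (-1) ^ l * real (n - l choose k) * (real (n choose l) * beta_nat n l))
      = (\<Sum>l=0..n. real (n choose k) * ((-1) ^ l * real (n - k choose l) * beta_nat n l))"
  proof (rule sum.cong[OF refl])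
    fix l assume "l \<in> {0..n}"
    then have "real (n - l choose k) * real (n choose l) = real (n choose k) * real (n - k choose l)"
      using choose_subset_swap[of l n k] by (metis atLeastAtMost_iff of_nat_mult)
    then show "(-1) ^ l * real (n - l choose k) * (real (n choose l) * beta_nat n l)
        = real (n choose k) * ((-1) ^ l * real (n - k choose l) * beta_nat n l)"
      by (simp add: algebra_simps)
  qed
  also have "\<dots> = real (n choose k) * (\<Sum>l=0..n - k. (-1) ^ l * real (n - k choose l) * beta_nat n l)"
    by (subst sum_distrib_left[symmetric], rule arg_cong[where f = "(*) _"],
        rule sum.mono_neutral_right) auto
  also have "\<dots> = real (n choose k) / real (n + (n - k) + 1)"
    using alt_beta_sum_eq[of "n - k" n] by (simp add: alt_beta_sum_def)
  finally show ?thesis .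
qed

lemma binomial_sum_inversion:
  fixes a :: "nat \<Rightarrow> real"
  shows "(\<Sum>l=0..n. real (n choose l) * a (n - l) / real (n + l + 1))
       = (\<Sum>l=0..n. (-1) ^ l * ((\<Sum>k=0..n - l. real (n - l choose k) * a k) / real (n + l + 1))
            * (real (n choose l) / real ((n + l) choose l)))"
proof -
  define w where "w l = real (n choose l) * beta_nat n l" for l
  have "(\<Sum>l=0..n. (-1) ^ l * ((\<Sum>k=0..n - l. real (n - l choose k) * a k) / real (n + l + 1))
            * (real (n choose l) / real ((n + l) choose l)))
      = (\<Sum>l=0..n. \<Sum>k=0..n. a k * ((-1) ^ l * real (n - l choose k) * w l))"
  proof (rule sum.cong[OF refl])
    fix l assume "l \<in> {0..n}"
    have "(\<Sum>k=0..n - l. real (n - l choose k) * a k) = (\<Sum>k=0..n. real (n - l choose k) * a k)"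
      by (rule sum.mono_neutral_left) auto
    then show "(-1) ^ l * ((\<Sum>k=0..n - l. real (n - l choose k) * a k) / real (n + l + 1))
            * (real (n choose l) / real ((n + l) choose l))
        = (\<Sum>k=0..n. a k * ((-1) ^ l * real (n - l choose k) * w l))"
      by (simp add: w_def beta_nat_binomial sum_distrib_left sum_distrib_right sum_divide_distrib
          mult_ac)
  qed
  also have "\<dots> = (\<Sum>k=0..n. a k * (\<Sum>l=0..n. (-1) ^ l * real (n - l choose k) * w l))"
    by (subst sum.swap) (simp add: sum_distrib_left)
  also have "\<dots> = (\<Sum>k=0..n. a k * (real (n choose k) / real (n + (n - k) + 1)))"
    by (rule sum.cong[OF refl]) (simp add: w_def alt_sum_coefficient)
  also have "\<dots> = (\<Sum>l=0..n. real (n choose l) * a (n - l) / real (n + l + 1))"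
    by (subst sum.atLeastAtMost_rev[of _ 0 n, simplified])
       (rule sum.cong, auto simp: binomial_symmetric[symmetric])
  finally show ?thesis by simp
qed

definition euler_gf :: "real \<Rightarrow> real fps" where
  "euler_gf x = fps_const 2 * fps_exp x / (fps_exp 1 + 1)"

lemma euler_poly_gf: "euler_poly n x = fact n * fps_nth (euler_gf x) n"
  by (simp add: euler_poly_def euler_gf_def)

text \<open>The denominator is a unit of the power series ring, so division is multiplication
  by its inverse.\<close>
lemma euler_gf_unit: "euler_gf x = fps_const 2 * fps_exp x * inverse (fps_exp 1 + 1)"
  by (simp add: euler_gf_def fps_divide_unit)

lemma euler_gf_shift: "euler_gf (x + y) = fps_exp y * euler_gf x"
  by (simp add: euler_gf_unit fps_exp_add_mult mult_ac)

text \<open>Substituting \<open>t \<mapsto> -t\<close> and multiplying numerator and denominator by \<open>e\<^sup>t\<close>: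
  \<open>2 exp(-x t) / (exp(-t) + 1) = 2 exp((1 - x) t) / (exp t + 1)\<close>.\<close>
lemma euler_gf_reflect: "euler_gf x oo - fps_X = euler_gf (1 - x)"
proof -
  define D :: "real fps" where "D = fps_exp 1 + 1"
  have D0: "fps_nth D 0 \<noteq> 0" by (simp add: D_def)
  have X0: "fps_nth (- fps_X :: real fps) 0 = 0" by simp
  have "D oo - fps_X = fps_exp (-1) * D"
    by (simp add: D_def fps_compose_add_distrib distrib_left fps_exp_add_mult[symmetric])
  then have inv: "inverse (D oo - fps_X) = fps_exp 1 * inverse D"
    by (simp add: fps_inverse_mult fps_exp_neg)
  have "euler_gf x oo - fps_X = fps_const 2 * fps_exp (- x) * inverse (D oo - fps_X)"
    unfolding euler_gf_unit D_def[symmetric]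
    by (simp add: fps_compose_mult_distrib[OF X0] fps_inverse_compose[OF X0 D0])
  also have "\<dots> = euler_gf (1 - x)"
    unfolding inv euler_gf_unit D_def[symmetric]
    by (simp add: fps_exp_add_mult[symmetric] mult_ac)
  finally show ?thesis .
qed

lemma euler_poly_add:
  "euler_poly m (x + y) = (\<Sum>k=0..m. real (m choose k) * y ^ (m - k) * euler_poly k x)"
proof -
  have "euler_poly m (x + y) = fact m * fps_nth (euler_gf x * fps_exp y) m"
    by (simp add: euler_poly_gf euler_gf_shift mult.commute)
  also have "\<dots> = (\<Sum>k=0..m. fact m * (fps_nth (euler_gf x) k * (y ^ (m - k) / fact (m - k))))"
    by (simp add: fps_mult_nth sum_distrib_left)
  also have "\<dots> = (\<Sum>k=0..m. real (m choose k) * y ^ (m - k) * euler_poly k x)"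
  proof (rule sum.cong[OF refl])
    fix k assume "k \<in> {0..m}"
    then have "real (m choose k) = fact m / (fact k * fact (m - k))"
      by (simp add: binomial_fact)
    then show "fact m * (fps_nth (euler_gf x) k * (y ^ (m - k) / fact (m - k)))
        = real (m choose k) * y ^ (m - k) * euler_poly k x"
      by (simp add: euler_poly_gf)
  qed
  finally show ?thesis .
qed

lemma euler_poly_reflect: "euler_poly n (1 - x) = (-1) ^ n * euler_poly n x"
proof -
  have "fps_nth (euler_gf (1 - x)) n = (-1) ^ n * fps_nth (euler_gf x) n"
    unfolding euler_gf_reflect[symmetric] fps_compose_uminus' by simp
  then show ?thesis
    by (simp add: euler_poly_gf)
qed

theorem theorem1:
  fixes n :: nat and x :: real
  shows "(\<Sum>l=0..n. real (n choose l) * euler_poly (n - l) x / real (n + l + 1))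
           = (\<Sum>l=0..n. (-1) ^ l * (euler_poly (n - l) (1 + x) / real (n + l + 1))
                 * (real (n choose l) / real ((n + l) choose l)))
         \<and>
         (\<Sum>l=0..n. real (n choose l) * euler_num (n - l) / real (n + l + 1))
           = (-1) ^ n * (\<Sum>l=0..n. (euler_num (n - l) / real (n + l + 1))
                 * (real (n choose l) / real ((n + l) choose l)))"
proof -
  have shift: "euler_poly m (1 + y) = (\<Sum>k=0..m. real (m choose k) * euler_poly k y)" for m y
    using euler_poly_add[of m y 1] by (simp add: add.commute)
  have general: "(\<Sum>l=0..n. real (n choose l) * euler_poly (n - l) y / real (n + l + 1))
           = (\<Sum>l=0..n. (-1) ^ l * (euler_poly (n - l) (1 + y) / real (n + l + 1))
                 * (real (n choose l) / real ((n + l) choose l)))" for y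
    unfolding shift by (rule binomial_sum_inversion)
  have sign: "(-1) ^ l * euler_poly (n - l) 1 = (-1) ^ n * euler_num (n - l)" if "l \<le> n" for l
    using euler_poly_reflect[of "n - l" 0] that
    by (simp add: euler_num_def power_add[symmetric])
  have "(\<Sum>l=0..n. real (n choose l) * euler_num (n - l) / real (n + l + 1))
      = (\<Sum>l=0..n. ((-1) ^ l * euler_poly (n - l) 1) / real (n + l + 1)
                 * (real (n choose l) / real ((n + l) choose l)))"
    using general[of 0] by (simp add: euler_num_def)
  also have "\<dots> = (-1) ^ n * (\<Sum>l=0..n. (euler_num (n - l) / real (n + l + 1))
                 * (real (n choose l) / real ((n + l) choose l)))"
    unfolding sum_distrib_left
    by (intro sum.cong refl) (simp add: sign flip: times_divide_eq_right mult.assoc)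
  finally show ?thesis
    using general by simp
qed

end
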